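(* Let $w\in\Sigma_{0,1,n}$. If there exists some planar expression for $w$, then the reduced expression of $w$ is planar, i.e. $w$ is a planar word.
   Context: $\Sigma_{0,1,n}$ is the free group on $t_1,\dots,t_n$; write $\overline t_k=t_k^{-1}$. Let $A$ be the set of $2n+2$ formal symbols $\overline z_1,t_1,\overline t_1,\dots,t_n,\overline t_n,z_1$, totally ordered by $\overline z_1<t_1<\overline t_1<t_2<\overline t_2<\dots<t_n<\overline t_n<z_1$. An expression for $w$ is a finite sequence $(a_1,\dots,a_m)$ of elements of $\{t_1^{\pm1},\dots,t_n^{\pm1}\}$ with $a_1\cdots a_m=w$, not necessarily reduced. Its Whitehead expansion is the $(2m+2)$-tuple $(c_1,\dots,c_{2m+2})=(\overline z_1,a_1,\overline a_1,a_2,\overline a_2,\dots,a_m,\overline a_m,z_1)$ of elements of $A$. Two $2$-element sets $\{a,b\},\{c,d\}$ of integers are nested if $a,b,c,d$ are distinct and either both or neither of $c,d$ lie strictly between $a$ and $b$. A family of such sets is nested if every two distinct members are nested. A $2M$-tuple $(c_1,\dots,c_{2M})$ of elements of $A$ is planar if there is a permutation $\pi$ of $\{1,\dots,2M\}$ satisfying three conditions: - $\pi(i)<\pi(j)$ implies $c_i\le c_j$; - the family $\{\{\pi(2i-1),\pi(2i)\}:1\le i\le M\}$ is nested; - the family $\{\{\pi(2i),\pi(2i+1)\}:1\le i\le M-1\}$ is nested. An expression is planar if its Whitehead expansion is planar. $w$ is a planar word if its unique reduced expression is planar. *)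

theory Defs
  imports Main
begin

text \<open>A letter of the free group on t_1..t_n: (k, True) is t_k, (k, False) is the inverse of t_k.\<close>
type_synonym letter = "nat \<times> bool"

definition letter_inv :: "letter \<Rightarrow> letter" where
  "letter_inv a = (fst a, \<not> snd a)"

fun freduce :: "letter list \<Rightarrow> letter list" where
  "freduce [] = []"
| "freduce (x # xs) =
     (case freduce xs of
        [] \<Rightarrow> [x]
      | y # ys \<Rightarrow> (if y = letter_inv x then ys else x # y # ys))"

definition expression_of :: "nat \<Rightarrow> letter list \<Rightarrow> bool" where
  "expression_of n e \<longleftrightarrow> (\<forall>a \<in> set e. 1 \<le> fst a \<and> fst a \<le> n)"

text \<open>The alphabet A is encoded order-preservingly in nat:
  zbar_1 = 0, t_k = 2k-1, tbar_k = 2k, z_1 = 2n+1.\<close>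
definition sym_rank :: "letter \<Rightarrow> nat" where
  "sym_rank a = (if snd a then 2 * fst a - 1 else 2 * fst a)"

definition whitehead_expansion :: "nat \<Rightarrow> letter list \<Rightarrow> nat list" where
  "whitehead_expansion n e =
     [0] @ concat (map (\<lambda>a. [sym_rank a, sym_rank (letter_inv a)]) e) @ [2 * n + 1]"

definition strictly_between :: "int \<Rightarrow> int \<Rightarrow> int \<Rightarrow> bool" where
  "strictly_between a b x \<longleftrightarrow> min a b < x \<and> x < max a b"

definition nested_pair :: "int \<Rightarrow> int \<Rightarrow> int \<Rightarrow> int \<Rightarrow> bool" where
  "nested_pair a b c d \<longleftrightarrow> distinct [a, b, c, d] \<and>
     (strictly_between a b c \<longleftrightarrow> strictly_between a b d)"

text \<open>Planarity of a 2M-tuple c (1-indexed: c_i = c ! (i-1)).\<close>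
definition planar_tuple :: "nat list \<Rightarrow> bool" where
  "planar_tuple c \<longleftrightarrow> even (length c) \<and>
    (let M = length c div 2 in
     \<exists>\<pi> :: nat \<Rightarrow> nat. bij_betw \<pi> {1..2*M} {1..2*M} \<and>
       (\<forall>i\<in>{1..2*M}. \<forall>j\<in>{1..2*M}. \<pi> i < \<pi> j \<longrightarrow> c ! (i - 1) \<le> c ! (j - 1)) \<and>
       (\<forall>i\<in>{1..M}. \<forall>j\<in>{1..M}. i \<noteq> j \<longrightarrow>
          nested_pair (int (\<pi> (2*i-1))) (int (\<pi> (2*i))) (int (\<pi> (2*j-1))) (int (\<pi> (2*j)))) \<and>
       (\<forall>i\<in>{1..M-1}. \<forall>j\<in>{1..M-1}. i \<noteq> j \<longrightarrow>
          nested_pair (int (\<pi> (2*i))) (int (\<pi> (2*i+1))) (int (\<pi> (2*j))) (int (\<pi> (2*j+1)))))"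

definition planar_expression :: "nat \<Rightarrow> letter list \<Rightarrow> bool" where
  "planar_expression n e \<longleftrightarrow> planar_tuple (whitehead_expansion n e)"

end

theory Submission
  imports Defs
begin

text \<open>A layout of a tuple c_1, ..., c_2M is an injective placement
  \<open>\<pi>\<close> of the positions on the integer line, monotone in the values, such that the
  upper arcs {2i-1, 2i} and the lower arcs {2i, 2i+1} each form a nested family; a tuple is
  planar iff it has a layout (any injective placement can be compressed to a permutation).

  If the expression e contains a cancelling pair a, a^-1 as letters j, j+1, then positions
  2j..2j+3 of its Whitehead expansion carry the values r, s, s, r with r distinct from s.  Among
  all cancelling pairs choose one whose outer span from \<open>\<pi>(2j)\<close> to \<open>\<pi>(2j+3)\<close> is shortest.
  No position is placed strictly inside this span: a position inside has value r, and walking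
  from it along one lower arc, one upper arc and one lower arc (each step preserving on which
  side of the arcs at the cancellation we are) reaches another cancelling pair with a strictly
  shorter span.  With the span empty, deleting the four positions and joining the arcs at
  2j-1 and 2j+4 gives a layout of the expansion of the shorter expression.  Since this
  deletion does not change the free reduction, induction on the length gives the theorem.\<close>

section \<open>Betweenness and nesting\<close>

lemma strictly_between_xor:
  "q \<noteq> a \<Longrightarrow> q \<noteq> b \<Longrightarrow> strictly_between a b q \<longleftrightarrow> (a < q) \<noteq> (b < q)"
  unfolding strictly_between_def by auto

lemma strictly_between_endpoints: "\<not> strictly_between a b a" "\<not> strictly_between a b b"
  unfolding strictly_between_def by auto

lemma strictly_between_dist:
  "strictly_between a b x \<Longrightarrow> strictly_between a b y \<Longrightarrow> \<bar>x - y\<bar> < \<bar>a - b\<bar>"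
  unfolding strictly_between_def by auto

lemma nested_pair_iff:
  "nested_pair a b c d \<longleftrightarrow> distinct [a, b, c, d] \<and> ((a < c) \<noteq> (b < c)) = ((a < d) \<noteq> (b < d))"
  unfolding nested_pair_def using strictly_between_xor[of c a b] strictly_between_xor[of d a b] by auto

lemma nested_pair_sym: "nested_pair a b c d \<Longrightarrow> nested_pair c d a b"
  unfolding nested_pair_iff by auto

lemma nested_pair_between:
  "nested_pair a b c d \<Longrightarrow> strictly_between a b c \<longleftrightarrow> strictly_between a b d"
  unfolding nested_pair_def by auto

lemma nested_pair_strict_mono:
  fixes g :: "int \<Rightarrow> int"
  assumes "strict_mono_on S g" "a \<in> S" "b \<in> S" "c \<in> S" "d \<in> S"
  shows "nested_pair (g a) (g b) (g c) (g d) \<longleftrightarrow> nested_pair a b c d"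
proof -
  have "\<And>x y. x \<in> S \<Longrightarrow> y \<in> S \<Longrightarrow> g x < g y \<longleftrightarrow> x < y"
    using strict_mono_on_less[OF assms(1)] by simp
  moreover have "\<And>x y. x \<in> S \<Longrightarrow> y \<in> S \<Longrightarrow> g x = g y \<longleftrightarrow> x = y"
    using strict_mono_on_imp_inj_on[OF assms(1)] unfolding inj_on_def by auto
  ultimately show ?thesis unfolding nested_pair_iff using assms(2-5) by simp
qed

lemma between_four_cycle:
  "q \<notin> {a, b, c, d} \<Longrightarrow>
   (strictly_between a d q \<noteq> strictly_between b c q) \<longleftrightarrow>
   (strictly_between a b q \<noteq> strictly_between c d q)"
  using strictly_between_xor[of q a d] strictly_between_xor[of q b c]
    strictly_between_xor[of q a b] strictly_between_xor[of q c d] by auto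

lemma between_shortcut:
  "q \<notin> {x, y, a, a'} \<Longrightarrow> \<not> strictly_between a a' q \<Longrightarrow>
   strictly_between x y q \<longleftrightarrow> (strictly_between x a q \<noteq> strictly_between a' y q)"
  using strictly_between_xor[of q x y] strictly_between_xor[of q x a]
    strictly_between_xor[of q a' y] strictly_between_xor[of q a a'] by auto

section \<open>Free reduction\<close>

lemma letter_inv_inv [simp]: "letter_inv (letter_inv a) = a"
  unfolding letter_inv_def by simp

lemma fst_letter_inv [simp]: "fst (letter_inv a) = fst a"
  unfolding letter_inv_def by simp

fun reduced :: "letter list \<Rightarrow> bool" where
  "reduced (x # y # ys) \<longleftrightarrow> y \<noteq> letter_inv x \<and> reduced (y # ys)"
| "reduced _ \<longleftrightarrow> True"

fun cancel :: "letter \<Rightarrow> letter list \<Rightarrow> letter list" where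
  "cancel x [] = [x]"
| "cancel x (y # ys) = (if y = letter_inv x then ys else x # y # ys)"

lemma freduce_Cons: "freduce (x # xs) = cancel x (freduce xs)"
  by (cases "freduce xs") auto

lemma reduced_tl: "reduced (x # xs) \<Longrightarrow> reduced xs"
  by (cases xs) auto

lemma reduced_cancel: "reduced w \<Longrightarrow> reduced (cancel x w)"
  by (cases w rule: reduced.cases) (auto intro: reduced_tl)

lemma reduced_freduce: "reduced (freduce e)"
proof (induction e)
  case (Cons x e)
  then show ?case by (simp only: freduce_Cons reduced_cancel)
qed simp

lemma freduce_reduced: "reduced e \<Longrightarrow> freduce e = e"
  by (induction e rule: reduced.induct) (simp_all add: freduce_Cons del: freduce.simps(2))

lemma cancel_cancel_inv: "reduced w \<Longrightarrow> cancel a (cancel (letter_inv a) w) = w"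
  by (cases w rule: reduced.cases) auto

lemma freduce_cancel_pair: "freduce (u @ [a, letter_inv a] @ v) = freduce (u @ v)"
proof (induction u)
  case Nil
  show ?case using cancel_cancel_inv[OF reduced_freduce, of a v]
    by (simp add: freduce_Cons del: freduce.simps)
qed (simp add: freduce_Cons del: freduce.simps)

lemma not_reduced_split: "\<not> reduced e \<Longrightarrow> \<exists>u a v. e = u @ [a, letter_inv a] @ v"
proof (induction e rule: reduced.induct)
  case (1 x y ys)
  show ?case
  proof (cases "y = letter_inv x")
    case True then show ?thesis by (metis append_Nil append_Cons)
  next
    case False
    then obtain u a v where "y # ys = u @ [a, letter_inv a] @ v" using 1 by auto
    then have "x # y # ys = (x # u) @ [a, letter_inv a] @ v" by simp
    then show ?thesis by blast
  qed
qed auto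

section \<open>Layouts\<close>

text \<open>A layout of the tuple c (positions 1..2M) with placement \<open>\<pi>\<close>.  It is the definition
  of planarity with the permutation replaced by an arbitrary injective integer placement.\<close>

locale planar_layout =
  fixes c :: "nat \<Rightarrow> nat" and M :: nat and \<pi> :: "nat \<Rightarrow> int"
  assumes inj: "inj_on \<pi> {1..2*M}"
    and mono: "\<And>i k. i \<in> {1..2*M} \<Longrightarrow> k \<in> {1..2*M} \<Longrightarrow> \<pi> i < \<pi> k \<Longrightarrow> c i \<le> c k"
    and upper: "\<And>i k. i \<in> {1..M} \<Longrightarrow> k \<in> {1..M} \<Longrightarrow> i \<noteq> k \<Longrightarrow>
                  nested_pair (\<pi> (2*i-1)) (\<pi> (2*i)) (\<pi> (2*k-1)) (\<pi> (2*k))"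
    and lower: "\<And>i k. i \<in> {1..M-1} \<Longrightarrow> k \<in> {1..M-1} \<Longrightarrow> i \<noteq> k \<Longrightarrow>
                  nested_pair (\<pi> (2*i)) (\<pi> (2*i+1)) (\<pi> (2*k)) (\<pi> (2*k+1))"

lemma planar_layout_cong:
  assumes "planar_layout c M \<pi>" and "\<And>i. i \<in> {1..2*M} \<Longrightarrow> c' i = c i"
  shows "planar_layout c' M \<pi>"
proof -
  interpret planar_layout c M \<pi> by (fact assms(1))
  show ?thesis
  proof
    fix i k assume "i \<in> {1..2*M}" "k \<in> {1..2*M}" "\<pi> i < \<pi> k"
    then show "c' i \<le> c' k" using mono assms(2) by metis
  qed (fact inj upper lower)+
qed

lemma rank_compression:
  fixes S :: "int set"
  assumes "finite S"
  obtains h :: "int \<Rightarrow> nat" where "strict_mono_on S h" "h ` S = {1..card S}"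
proof -
  define h where "h x = card {y\<in>S. y \<le> x}" for x
  have "strict_mono_on S h"
  proof (rule strict_mono_onI)
    fix x y assume xy: "x \<in> S" "y \<in> S" "x < y"
    then have "{z\<in>S. z \<le> x} \<subset> {z\<in>S. z \<le> y}" by force
    then show "h x < h y" unfolding h_def by (rule psubset_card_mono[rotated]) (use assms in auto)
  qed
  moreover have "h ` S \<subseteq> {1..card S}"
  proof
    fix z assume "z \<in> h ` S"
    then obtain x where x: "x \<in> S" "z = h x" by auto
    then have "{y\<in>S. y \<le> x} \<noteq> {}" by auto
    then have "1 \<le> h x" unfolding h_def using assms by (simp add: Suc_le_eq card_gt_0_iff)
    moreover have "h x \<le> card S" unfolding h_def by (rule card_mono) (use assms in auto)
    ultimately show "z \<in> {1..card S}" using x by auto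
  qed
  moreover have "card (h ` S) = card {1..card S}"
    using card_image[OF strict_mono_on_imp_inj_on[OF calculation(1)]] by simp
  ultimately show ?thesis using that card_subset_eq[of "{1..card S}" "h ` S"] by blast
qed

lemma (in planar_layout) strict_mono_transform:
  fixes g :: "int \<Rightarrow> int"
  assumes g: "strict_mono_on (\<pi> ` {1..2*M}) g"
  shows "planar_layout c M (\<lambda>i. g (\<pi> i))"
proof
  have S: "\<And>i. i \<in> {1..2*M} \<Longrightarrow> \<pi> i \<in> \<pi> ` {1..2*M}" by blast
  show "inj_on (\<lambda>i. g (\<pi> i)) {1..2*M}"
    using comp_inj_on[OF inj strict_mono_on_imp_inj_on[OF g]] unfolding comp_def .
next
  fix i k assume ik: "i \<in> {1..2*M}" "k \<in> {1..2*M}" "g (\<pi> i) < g (\<pi> k)"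
  then have "\<pi> i < \<pi> k" using strict_mono_on_less[OF g] by blast
  then show "c i \<le> c k" using mono ik(1,2) by blast
next
  fix i k assume "i \<in> {1..M}" "k \<in> {1..M}" "i \<noteq> k"
  moreover from this have "2*i-1 \<in> {1..2*M}" "2*i \<in> {1..2*M}" "2*k-1 \<in> {1..2*M}" "2*k \<in> {1..2*M}"
    by auto
  ultimately show "nested_pair (g (\<pi> (2*i-1))) (g (\<pi> (2*i))) (g (\<pi> (2*k-1))) (g (\<pi> (2*k)))"
    using upper nested_pair_strict_mono[OF g] by blast
next
  fix i k assume "i \<in> {1..M-1}" "k \<in> {1..M-1}" "i \<noteq> k"
  moreover from this have "2*i \<in> {1..2*M}" "2*i+1 \<in> {1..2*M}" "2*k \<in> {1..2*M}" "2*k+1 \<in> {1..2*M}"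
    by auto
  ultimately show "nested_pair (g (\<pi> (2*i))) (g (\<pi> (2*i+1))) (g (\<pi> (2*k))) (g (\<pi> (2*k+1)))"
    using lower nested_pair_strict_mono[OF g] by blast
qed

lemma (in planar_layout) compress_to_permutation:
  "\<exists>\<rho>. bij_betw \<rho> {1..2*M} {1..2*M} \<and> planar_layout c M (\<lambda>i. int (\<rho> i))"
proof -
  define S where "S = \<pi> ` {1..2*M}"
  have "card S = 2*M" unfolding S_def using card_image[OF inj] by simp
  then obtain h where h: "strict_mono_on S h" "h ` S = {1..2*M}"
    using rank_compression[of S] unfolding S_def by auto
  have "bij_betw (\<lambda>i. h (\<pi> i)) {1..2*M} {1..2*M}"
    unfolding bij_betw_def
    using comp_inj_on[OF inj strict_mono_on_imp_inj_on[OF h(1)[unfolded S_def]]] h(2)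
    by (simp add: o_def image_image S_def)
  moreover have "strict_mono_on S (\<lambda>x. int (h x))"
    using h(1) unfolding strict_mono_on_def by simp
  then have "planar_layout c M (\<lambda>i. int (h (\<pi> i)))"
    using strict_mono_transform unfolding S_def by blast
  ultimately show ?thesis by blast
qed

lemma planar_tuple_iff_layout:
  "planar_tuple c \<longleftrightarrow> even (length c) \<and> (\<exists>\<pi>. planar_layout (\<lambda>i. c ! (i - 1)) (length c div 2) \<pi>)"
    (is "_ \<longleftrightarrow> _ \<and> (\<exists>\<pi>. planar_layout ?c ?M \<pi>)")
proof -
  have layout_iff: "planar_layout ?c ?M (\<lambda>i. int (\<rho> i)) \<longleftrightarrow>
      (\<forall>i\<in>{1..2*?M}. \<forall>j\<in>{1..2*?M}. \<rho> i < \<rho> j \<longrightarrow> ?c i \<le> ?c j) \<and>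
      (\<forall>i\<in>{1..?M}. \<forall>j\<in>{1..?M}. i \<noteq> j \<longrightarrow>
         nested_pair (int (\<rho> (2*i-1))) (int (\<rho> (2*i))) (int (\<rho> (2*j-1))) (int (\<rho> (2*j)))) \<and>
      (\<forall>i\<in>{1..?M-1}. \<forall>j\<in>{1..?M-1}. i \<noteq> j \<longrightarrow>
         nested_pair (int (\<rho> (2*i))) (int (\<rho> (2*i+1))) (int (\<rho> (2*j))) (int (\<rho> (2*j+1))))"
    if "bij_betw \<rho> {1..2*?M} {1..2*?M}" for \<rho> :: "nat \<Rightarrow> nat"
  proof -
    have "inj_on (\<lambda>i. int (\<rho> i)) {1..2*?M}"
      using comp_inj_on[OF bij_betw_imp_inj_on[OF that], of int] inj_on_subset[OF inj_of_nat subset_UNIV]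
      unfolding comp_def by blast
    then show ?thesis unfolding planar_layout_def of_nat_less_iff by blast
  qed
  show ?thesis
  proof
    assume "planar_tuple c"
    then show "even (length c) \<and> (\<exists>\<pi>. planar_layout ?c ?M \<pi>)"
      unfolding planar_tuple_def Let_def using layout_iff by blast
  next
    assume "even (length c) \<and> (\<exists>\<pi>. planar_layout ?c ?M \<pi>)"
    then obtain \<rho> where "even (length c)" "bij_betw \<rho> {1..2*?M} {1..2*?M}"
      "planar_layout ?c ?M (\<lambda>i. int (\<rho> i))"
      using planar_layout.compress_to_permutation by blast
    then show "planar_tuple c" unfolding planar_tuple_def Let_def using layout_iff by blast
  qed
qed

section \<open>Deleting an empty block\<close>

text \<open>Deleting positions 2j..2j+3 renumbers position k as \<open>skip j k\<close>, and arc index i as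
  \<open>shift j i\<close>.\<close>

definition skip :: "nat \<Rightarrow> nat \<Rightarrow> nat" where
  "skip j k = (if k < 2*j then k else k + 4)"

definition shift :: "nat \<Rightarrow> nat \<Rightarrow> nat" where
  "shift j i = (if i < j then i else i + 2)"

lemma skip_even: "skip j (2*i) = 2 * shift j i"
  and skip_odd: "skip j (2*i+1) = 2 * shift j i + 1"
  unfolding skip_def shift_def by auto

lemma skip_odd': "1 \<le> i \<Longrightarrow> i \<noteq> j \<Longrightarrow> skip j (2*i-1) = 2 * shift j i - 1"
  unfolding skip_def shift_def by auto

context planar_layout
begin

lemma pos_neq: "x \<in> {1..2*M} \<Longrightarrow> y \<in> {1..2*M} \<Longrightarrow> x \<noteq> y \<Longrightarrow> \<pi> x \<noteq> \<pi> y"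
  using inj unfolding inj_on_def by blast

text \<open>If no position is placed strictly inside the span from \<open>\<pi>(2j)\<close> to \<open>\<pi>(2j+3)\<close>, the
  bridge arc {2j-1, 2j+4} is nested with every upper arc away from the block: it is the
  concatenation of the upper arcs j and j+2 across an empty gap.\<close>

lemma bridge_nested:
  assumes j: "1 \<le> j" "j + 2 \<le> M"
    and empty: "\<forall>k\<in>{1..2*M}. \<not> strictly_between (\<pi> (2*j)) (\<pi> (2*j+3)) (\<pi> k)"
    and t: "t \<in> {1..M}" "t \<notin> {j, j+1, j+2}"
  shows "nested_pair (\<pi> (2*j-1)) (\<pi> (2*j+4)) (\<pi> (2*t-1)) (\<pi> (2*t))"
proof -
  have left: "nested_pair (\<pi> (2*j-1)) (\<pi> (2*j)) (\<pi> (2*t-1)) (\<pi> (2*t))"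
    using upper[of j t] j t by simp
  have eqs: "2*(j+2) = 2*j+4" "2*j+4-1 = 2*j+3" by simp_all
  have "nested_pair (\<pi> (2*(j+2)-1)) (\<pi> (2*(j+2))) (\<pi> (2*t-1)) (\<pi> (2*t))"
    using upper[of "j+2" t] j t by simp
  then have right: "nested_pair (\<pi> (2*j+3)) (\<pi> (2*j+4)) (\<pi> (2*t-1)) (\<pi> (2*t))"
    unfolding eqs .
  have block: "2*j-1 \<in> {1..2*M}" "2*j \<in> {1..2*M}" "2*j+3 \<in> {1..2*M}" "2*j+4 \<in> {1..2*M}"
    using j by auto
  have shortcut: "strictly_between (\<pi> (2*j-1)) (\<pi> (2*j+4)) (\<pi> q) \<longleftrightarrow>
      (strictly_between (\<pi> (2*j-1)) (\<pi> (2*j)) (\<pi> q) \<noteq>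
       strictly_between (\<pi> (2*j+3)) (\<pi> (2*j+4)) (\<pi> q))"
    if q: "q \<in> {1..2*M}" "q \<noteq> 2*j-1" "q \<noteq> 2*j+4" "q \<noteq> 2*j" "q \<noteq> 2*j+3" for q
  proof (rule between_shortcut)
    show "\<pi> q \<notin> {\<pi> (2*j-1), \<pi> (2*j+4), \<pi> (2*j), \<pi> (2*j+3)}"
      using pos_neq[OF q(1) block(1) q(2)] pos_neq[OF q(1) block(4) q(3)]
        pos_neq[OF q(1) block(2) q(4)] pos_neq[OF q(1) block(3) q(5)] by blast
    show "\<not> strictly_between (\<pi> (2*j)) (\<pi> (2*j+3)) (\<pi> q)" using empty q(1) by blast
  qed
  have t_pos: "2*t-1 \<in> {1..2*M}" "2*t \<in> {1..2*M}" using t by auto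
  have "2*t-1 \<noteq> 2*j-1" "2*t-1 \<noteq> 2*j+4" "2*t-1 \<noteq> 2*j" "2*t-1 \<noteq> 2*j+3"
       "2*t \<noteq> 2*j-1" "2*t \<noteq> 2*j+4" "2*t \<noteq> 2*j" "2*t \<noteq> 2*j+3" "2*t-1 \<noteq> 2*t"
    using t j by auto
  note t_ne = this
  have "strictly_between (\<pi> (2*j-1)) (\<pi> (2*j+4)) (\<pi> (2*t-1)) \<longleftrightarrow>
        strictly_between (\<pi> (2*j-1)) (\<pi> (2*j+4)) (\<pi> (2*t))"
    unfolding shortcut[OF t_pos(1) t_ne(1-4)] shortcut[OF t_pos(2) t_ne(5-8)]
      nested_pair_between[OF left] nested_pair_between[OF right] ..
  moreover have "distinct [\<pi> (2*j-1), \<pi> (2*j+4), \<pi> (2*t-1), \<pi> (2*t)]"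
    using pos_neq[OF t_pos(1) block(1) t_ne(1)] pos_neq[OF t_pos(1) block(4) t_ne(2)]
      pos_neq[OF t_pos(2) block(1) t_ne(5)] pos_neq[OF t_pos(2) block(4) t_ne(6)]
      pos_neq[OF t_pos(1) t_pos(2) t_ne(9)] pos_neq[OF block(1) block(4)] by auto
  ultimately show ?thesis unfolding nested_pair_def by blast
qed

text \<open>After deleting positions 2j..2j+3 across an empty span, the upper arcs are again nested:
  the new arc j is the bridge, all other arcs are old upper arcs.\<close>

lemma collapse_upper:
  assumes j: "1 \<le> j" "j + 2 \<le> M"
    and empty: "\<forall>k\<in>{1..2*M}. \<not> strictly_between (\<pi> (2*j)) (\<pi> (2*j+3)) (\<pi> k)"
    and ik: "i \<in> {1..M-2}" "k \<in> {1..M-2}" "i \<noteq> k"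
  shows "nested_pair (\<pi> (skip j (2*i-1))) (\<pi> (skip j (2*i))) (\<pi> (skip j (2*k-1))) (\<pi> (skip j (2*k)))"
proof -
  have shift_range: "shift j i \<in> {1..M}" "shift j i \<notin> {j, j+1, j+2}"
    if "i \<in> {1..M-2}" "i \<noteq> j" for i
    using that j unfolding shift_def by auto
  have old_pair: "\<pi> (skip j (2*i-1)) = \<pi> (2 * shift j i - 1)" "\<pi> (skip j (2*i)) = \<pi> (2 * shift j i)"
    if "i \<in> {1..M-2}" "i \<noteq> j" for i
    using that skip_odd' skip_even by auto
  have new_pair: "skip j (2*j-1) = 2*j-1" "skip j (2*j) = 2*j+4"
    unfolding skip_def using j by auto
  consider "i = j" | "k = j" | "i \<noteq> j" "k \<noteq> j" by blast
  then show ?thesis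
  proof cases
    case 1
    then have "k \<noteq> j" using ik by simp
    then show ?thesis
      using bridge_nested[OF j empty shift_range[OF ik(2)]] old_pair[OF ik(2)] new_pair 1 by simp
  next
    case 2
    then have "i \<noteq> j" using ik by simp
    then show ?thesis
      using nested_pair_sym[OF bridge_nested[OF j empty shift_range[OF ik(1)]]] old_pair[OF ik(1)]
        new_pair 2 by simp
  next
    case 3
    moreover have "shift j i \<noteq> shift j k" using ik(3) unfolding shift_def by auto
    ultimately show ?thesis
      using upper[of "shift j i" "shift j k"] shift_range ik old_pair by simp
  qed
qed

lemma collapse:
  assumes j: "1 \<le> j" "j + 2 \<le> M"
    and empty: "\<forall>k\<in>{1..2*M}. \<not> strictly_between (\<pi> (2*j)) (\<pi> (2*j+3)) (\<pi> k)"
  shows "planar_layout (\<lambda>k. c (skip j k)) (M - 2) (\<lambda>k. \<pi> (skip j k))"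
proof
  have "inj_on (skip j) {1..2*(M-2)}" "skip j ` {1..2*(M-2)} \<subseteq> {1..2*M}"
    unfolding skip_def inj_on_def using j by auto
  then show "inj_on (\<lambda>k. \<pi> (skip j k)) {1..2*(M-2)}"
    using comp_inj_on[of "skip j" _ \<pi>] inj_on_subset[OF inj] unfolding comp_def by blast
next
  fix i k assume "i \<in> {1..2*(M-2)}" "k \<in> {1..2*(M-2)}" "\<pi> (skip j i) < \<pi> (skip j k)"
  moreover from this have "skip j i \<in> {1..2*M}" "skip j k \<in> {1..2*M}"
    using j unfolding skip_def by auto
  ultimately show "c (skip j i) \<le> c (skip j k)" using mono by blast
next
  fix i k assume "i \<in> {1..M-2}" "k \<in> {1..M-2}" "i \<noteq> k"
  then show "nested_pair (\<pi> (skip j (2*i-1))) (\<pi> (skip j (2*i)))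
                         (\<pi> (skip j (2*k-1))) (\<pi> (skip j (2*k)))"
    by (rule collapse_upper[OF j empty])
next
  fix i k assume ik: "i \<in> {1..M-2-1}" "k \<in> {1..M-2-1}" "i \<noteq> k"
  have "shift j i \<in> {1..M-1}" "shift j k \<in> {1..M-1}" "shift j i \<noteq> shift j k"
    using ik j unfolding shift_def by auto
  then show "nested_pair (\<pi> (skip j (2*i))) (\<pi> (skip j (2*i+1)))
                         (\<pi> (skip j (2*k))) (\<pi> (skip j (2*k+1)))"
    unfolding skip_even skip_odd by (rule lower)
qed

end

section \<open>The shortest cancellation has an empty span\<close>

lemma (in planar_layout) squeeze:
  assumes "x \<in> {1..2*M}" "y \<in> {1..2*M}" "k \<in> {1..2*M}" "c x = c y"
    and "strictly_between (\<pi> x) (\<pi> y) (\<pi> k)"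
  shows "c k = c x"
  using assms mono[of x k] mono[of k x] mono[of y k] mono[of k y]
  unfolding strictly_between_def by (cases "\<pi> x < \<pi> y") auto

lemma double_succ: "2*(d+1) = 2*d+2" "2*d+2+1 = 2*d+3" "2*d+2-1 = 2*d+1"
  for d :: nat by simp_all

definition cancel_at :: "(nat \<Rightarrow> nat) \<Rightarrow> nat \<Rightarrow> nat \<Rightarrow> bool" where
  "cancel_at c M j \<longleftrightarrow> 1 \<le> j \<and> j + 2 \<le> M \<and> c (2*j) = c (2*j+3) \<and> c (2*j+1) = c (2*j+2)"

text \<open>Layouts of tuples shaped like Whitehead expansions: the two values of a lower arc differ,
  and the end values occur nowhere in the interior.\<close>

locale alternating_layout = planar_layout +
  assumes alternating: "\<And>l. l \<in> {1..M-1} \<Longrightarrow> c (2*l) \<noteq> c (2*l+1)"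
    and ends: "\<And>k. k \<in> {2..2*M-1} \<Longrightarrow> c k \<noteq> c 1 \<and> c k \<noteq> c (2*M)"

locale layout_cancellation = alternating_layout +
  fixes j :: nat
  assumes cancellation: "cancel_at c M j"
begin

abbreviation inside :: "nat \<Rightarrow> bool" where
  "inside k \<equiv> strictly_between (\<pi> (2*j)) (\<pi> (2*j+3)) (\<pi> k)"

abbreviation in_gap :: "nat \<Rightarrow> bool" where
  "in_gap k \<equiv> strictly_between (\<pi> (2*j+1)) (\<pi> (2*j+2)) (\<pi> k)"

abbreviation one_side :: "nat \<Rightarrow> bool" where
  "one_side k \<equiv> strictly_between (\<pi> (2*j)) (\<pi> (2*j+1)) (\<pi> k) \<noteq>
                 strictly_between (\<pi> (2*j+2)) (\<pi> (2*j+3)) (\<pi> k)"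

lemma j_range: "1 \<le> j" "j + 2 \<le> M"
  using cancellation unfolding cancel_at_def by auto

lemma block_values: "c (2*j+3) = c (2*j)" "c (2*j+2) = c (2*j+1)" "c (2*j+1) \<noteq> c (2*j)"
proof -
  have "j \<in> {1..M-1}" using j_range by auto
  then show "c (2*j+1) \<noteq> c (2*j)" using alternating by metis
  show "c (2*j+3) = c (2*j)" "c (2*j+2) = c (2*j+1)" using cancellation unfolding cancel_at_def by auto
qed

lemma interior_not_end: "c (2*j) \<noteq> c 1" "c (2*j) \<noteq> c (2*M)" "c (2*j+1) \<noteq> c 1" "c (2*j+1) \<noteq> c (2*M)"
  using ends[of "2*j"] ends[of "2*j+1"] j_range by auto

lemma inside_value: "k \<in> {1..2*M} \<Longrightarrow> inside k \<Longrightarrow> c k = c (2*j)"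
  using squeeze[of "2*j" "2*j+3" k] block_values j_range by auto

lemma in_gap_value: "k \<in> {1..2*M} \<Longrightarrow> in_gap k \<Longrightarrow> c k = c (2*j+1)"
  using squeeze[of "2*j+1" "2*j+2" k] block_values j_range by auto

lemma inside_iff:
  assumes "k \<in> {1..2*M}" "k \<notin> {2*j, 2*j+1, 2*j+2, 2*j+3}"
  shows "inside k \<longleftrightarrow> in_gap k \<noteq> one_side k"
proof -
  have "\<pi> k \<noteq> \<pi> x" if "x \<in> {2*j, 2*j+1, 2*j+2, 2*j+3}" for x
    using pos_neq[OF assms(1), of x] that j_range assms(2) by auto
  then have "\<pi> k \<notin> {\<pi> (2*j), \<pi> (2*j+1), \<pi> (2*j+2), \<pi> (2*j+3)}" by auto
  then show ?thesis using between_four_cycle by blast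
qed

lemma one_side_lower:
  assumes "d \<in> {1..M-1}" "d \<notin> {j, j+1}"
  shows "one_side (2*d) \<longleftrightarrow> one_side (2*d+1)"
proof -
  have "nested_pair (\<pi> (2*j)) (\<pi> (2*j+1)) (\<pi> (2*d)) (\<pi> (2*d+1))"
    using lower[of j d] j_range assms by auto
  moreover have "nested_pair (\<pi> (2*(j+1))) (\<pi> (2*(j+1)+1)) (\<pi> (2*d)) (\<pi> (2*d+1))"
    using lower[of "j+1" d] j_range assms by auto
  moreover have "2*(j+1) = 2*j+2" "2*j+2+1 = 2*j+3" by simp_all
  ultimately show ?thesis by (simp only: nested_pair_between)
qed

lemma in_gap_upper: "u \<in> {1..M} \<Longrightarrow> u \<noteq> j+1 \<Longrightarrow> in_gap (2*u-1) \<longleftrightarrow> in_gap (2*u)"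
  using upper[of "j+1" u] j_range nested_pair_between by auto

lemma one_side_lower_succ:
  assumes "d+1 \<in> {1..M-1}" "d+1 \<notin> {j, j+1}"
  shows "one_side (2*d+2) \<longleftrightarrow> one_side (2*d+3)"
  using one_side_lower[OF assms] unfolding double_succ .

lemma in_gap_upper_succ:
  assumes "d+1 \<in> {1..M}" "d \<noteq> j"
  shows "in_gap (2*d+1) \<longleftrightarrow> in_gap (2*d+2)"
  using in_gap_upper[of "d+1"] assms unfolding double_succ by simp

lemma alternating_succ: "d+1 \<in> {1..M-1} \<Longrightarrow> c (2*d+2) \<noteq> c (2*d+3)"
  using alternating[of "d+1"] unfolding double_succ .

lemma walk_right:
  assumes l: "l \<in> {1..M-1}" and start: "inside (2*l)"
  shows "cancel_at c M l \<and> inside (2*l+3)"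
proof -
  have pos: "2*l \<in> {1..2*M}" "2*l+1 \<in> {1..2*M}" "2*l+2 \<in> {1..2*M}" using l by auto
  have v0: "c (2*l) = c (2*j)" using inside_value pos(1) start by blast
  have "l \<noteq> j" using start strictly_between_endpoints by auto
  moreover have "l \<noteq> j+1"
  proof
    assume "l = j+1"
    then have "2*l = 2*j+2" by simp
    then show False using v0 block_values by metis
  qed
  ultimately have lj: "2*l \<notin> {2*j, 2*j+1, 2*j+2, 2*j+3}" "2*l+1 \<notin> {2*j, 2*j+1, 2*j+2, 2*j+3}"
    by auto
  have "one_side (2*l)" using inside_iff[OF pos(1) lj(1)] start in_gap_value[OF pos(1)] v0 block_values
    by auto
  then have "one_side (2*l+1)" using one_side_lower l \<open>l \<noteq> j\<close> \<open>l \<noteq> j+1\<close> by blast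
  moreover have "\<not> inside (2*l+1)" using inside_value[OF pos(2)] alternating[OF l] v0 by auto
  ultimately have "in_gap (2*l+1)" using inside_iff[OF pos(2) lj(2)] by blast
  then have gap2: "in_gap (2*l+2)" using in_gap_upper_succ l \<open>l \<noteq> j\<close> by auto
  then have v2: "c (2*l+2) = c (2*j+1)" using in_gap_value pos(3) by blast
  have v1: "c (2*l+1) = c (2*j+1)" using in_gap_value pos(2) \<open>in_gap (2*l+1)\<close> by blast
  have "2*l+2 \<noteq> 2*M" using v2 interior_not_end by metis
  then have l1: "l+1 \<in> {1..M-1}" using l by auto
  have "l+1 \<noteq> j" using v2 block_values by auto
  then have lj': "2*l+2 \<notin> {2*j, 2*j+1, 2*j+2, 2*j+3}" "2*l+3 \<notin> {2*j, 2*j+1, 2*j+2, 2*j+3}"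
    using \<open>l \<noteq> j\<close> by auto
  have pos3: "2*l+3 \<in> {1..2*M}" using l1 by auto
  have "\<not> inside (2*l+2)" using inside_value[OF pos(3)] v2 block_values by auto
  then have "one_side (2*l+2)" using inside_iff[OF pos(3) lj'(1)] gap2 by blast
  then have "one_side (2*l+3)" using one_side_lower_succ l1 \<open>l+1 \<noteq> j\<close> \<open>l \<noteq> j\<close> by simp
  moreover have "\<not> in_gap (2*l+3)" using in_gap_value[OF pos3] alternating_succ[OF l1] v2 by auto
  ultimately have "inside (2*l+3)" using inside_iff[OF pos3 lj'(2)] by blast
  moreover have "c (2*l+3) = c (2*j)" using inside_value[OF pos3] calculation by blast
  ultimately show ?thesis using l l1 v0 v1 v2 unfolding cancel_at_def by auto
qed

lemma walk_left:
  assumes l: "l + 2 \<le> M" and start: "inside (2*l+3)"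
  shows "cancel_at c M l \<and> inside (2*l)"
proof -
  have pos: "2*l+1 \<in> {1..2*M}" "2*l+2 \<in> {1..2*M}" "2*l+3 \<in> {1..2*M}" using l by auto
  have v3: "c (2*l+3) = c (2*j)" using inside_value pos(3) start by blast
  have "l \<noteq> j" using start strictly_between_endpoints by auto
  moreover have "l+1 \<noteq> j"
  proof
    assume "l+1 = j"
    then have "2*l+3 = 2*j+1" by simp
    then show False using v3 block_values by metis
  qed
  ultimately have lj: "2*l+3 \<notin> {2*j, 2*j+1, 2*j+2, 2*j+3}" "2*l+2 \<notin> {2*j, 2*j+1, 2*j+2, 2*j+3}"
    by auto
  have l1: "l+1 \<in> {1..M-1}" using l by auto
  have "one_side (2*l+3)" using inside_iff[OF pos(3) lj(1)] start in_gap_value[OF pos(3)] v3 block_values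
    by auto
  then have "one_side (2*l+2)"
    using one_side_lower_succ l1 \<open>l \<noteq> j\<close> \<open>l+1 \<noteq> j\<close> by simp
  moreover have "\<not> inside (2*l+2)"
    using inside_value[OF pos(2)] alternating_succ[OF l1] v3 by auto
  ultimately have gap2: "in_gap (2*l+2)" using inside_iff[OF pos(2) lj(2)] by blast
  then have gap1: "in_gap (2*l+1)" using in_gap_upper_succ l \<open>l \<noteq> j\<close> by auto
  have v1: "c (2*l+1) = c (2*j+1)" using in_gap_value pos(1) gap1 by blast
  have v2: "c (2*l+2) = c (2*j+1)" using in_gap_value pos(2) gap2 by blast
  have "l \<noteq> 0"
  proof
    assume "l = 0"
    then show False using v1 interior_not_end(3) by simp
  qed
  then have l0: "l \<in> {1..M-1}" using l by auto
  have "l \<noteq> j+1"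
  proof
    assume "l = j+1"
    then have "2*l+1 = 2*j+3" by simp
    then show False using v1 block_values by metis
  qed
  then have lj': "2*l+1 \<notin> {2*j, 2*j+1, 2*j+2, 2*j+3}" "2*l \<notin> {2*j, 2*j+1, 2*j+2, 2*j+3}"
    using \<open>l \<noteq> j\<close> by auto
  have pos0: "2*l \<in> {1..2*M}" using l0 by auto
  have "\<not> inside (2*l+1)" using inside_value[OF pos(1)] v1 block_values by auto
  then have "one_side (2*l+1)" using inside_iff[OF pos(1) lj'(1)] gap1 by blast
  then have "one_side (2*l)" using one_side_lower[OF l0] \<open>l \<noteq> j\<close> \<open>l \<noteq> j+1\<close> by blast
  moreover have "\<not> in_gap (2*l)" using in_gap_value[OF pos0] alternating[OF l0] v1 by auto
  ultimately have "inside (2*l)" using inside_iff[OF pos0 lj'(2)] by blast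
  moreover have "c (2*l) = c (2*j)" using inside_value[OF pos0] calculation by blast
  ultimately show ?thesis using l l0 v1 v2 v3 unfolding cancel_at_def by auto
qed

lemma shorter_cancellation:
  assumes k: "k \<in> {1..2*M}" and "inside k"
  shows "\<exists>l. cancel_at c M l \<and> \<bar>\<pi> (2*l) - \<pi> (2*l+3)\<bar> < \<bar>\<pi> (2*j) - \<pi> (2*j+3)\<bar>"
proof -
  have "c k = c (2*j)" using inside_value assms by blast
  then have "k \<noteq> 1" "k \<noteq> 2*M" using interior_not_end by auto
  then have k_interior: "2 \<le> k" "k \<le> 2*M - 1" using k by auto
  show ?thesis
  proof (cases "even k")
    case True
    then obtain l where "k = 2*l" by blast
    then have "l \<in> {1..M-1}" "inside (2*l)" using k_interior \<open>inside k\<close> by auto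
    then show ?thesis using walk_right strictly_between_dist by blast
  next
    case False
    then have "k = 2*((k-3) div 2) + 3" using k_interior by presburger
    then obtain l where "k = 2*l+3" by blast
    then have "l + 2 \<le> M" "inside (2*l+3)" using k_interior \<open>inside k\<close> by auto
    then show ?thesis using walk_left strictly_between_dist by blast
  qed
qed

end

text \<open>Hence a cancellation of minimal span has an empty span and its block can be deleted.\<close>

lemma (in alternating_layout) collapsible_cancellation:
  assumes "cancel_at c M j0"
  shows "\<exists>j. cancel_at c M j \<and> planar_layout (\<lambda>k. c (skip j k)) (M - 2) (\<lambda>k. \<pi> (skip j k))"
proof -
  define span where "span l = nat \<bar>\<pi> (2*l) - \<pi> (2*l+3)\<bar>" for l
  obtain j where j: "cancel_at c M j" and least: "\<And>l. cancel_at c M l \<Longrightarrow> span j \<le> span l"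
    using ex_has_least_nat[of "cancel_at c M" j0 span] assms by blast
  interpret layout_cancellation c M \<pi> j by unfold_locales (fact j)
  have "\<forall>k\<in>{1..2*M}. \<not> inside k"
  proof (intro ballI notI)
    fix k assume "k \<in> {1..2*M}" "inside k"
    then obtain l where "cancel_at c M l" "span l < span j"
      using shorter_cancellation unfolding span_def by fastforce
    then show False using least by fastforce
  qed
  then show ?thesis using collapse j_range j by blast
qed

section \<open>Whitehead expansions\<close>

definition body :: "letter list \<Rightarrow> nat list" where
  "body e = concat (map (\<lambda>a. [sym_rank a, sym_rank (letter_inv a)]) e)"

lemma body_append [simp]: "body (u @ v) = body u @ body v"
  unfolding body_def by simp

lemma length_body [simp]: "length (body e) = 2 * length e"
  unfolding body_def by (induction e) auto

lemma body_pair: "body [a, b] = [sym_rank a, sym_rank (letter_inv a), sym_rank b, sym_rank (letter_inv b)]"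
  and body_single: "body [a] = [sym_rank a, sym_rank (letter_inv a)]"
  unfolding body_def by simp_all

lemma whitehead_expansion_body: "whitehead_expansion n e = 0 # body e @ [2*n+1]"
  unfolding whitehead_expansion_def body_def by simp

definition expansion_at :: "nat \<Rightarrow> letter list \<Rightarrow> nat \<Rightarrow> nat" where
  "expansion_at n e k = whitehead_expansion n e ! (k - 1)"

lemma expansion_at_first: "expansion_at n e 1 = 0"
  and expansion_at_last: "expansion_at n e (2 * length e + 2) = 2*n+1"
  unfolding expansion_at_def whitehead_expansion_body by (simp_all add: nth_append)

lemma expansion_at_segment:
  assumes "i < 2 * length w"
  shows "expansion_at n (u @ w @ v) (2 * length u + 2 + i) = body w ! i"
  using assms unfolding expansion_at_def whitehead_expansion_body by (simp add: nth_append)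

lemma nth_skip_block:
  assumes "length xs = 2*j - 1" "length ys = 4" "1 \<le> j" "1 \<le> k"
  shows "(xs @ zs) ! (k - 1) = (xs @ ys @ zs) ! (skip j k - 1)"
proof (cases "k < 2*j")
  case True
  then have "skip j k = k" "k - 1 < length xs" using assms unfolding skip_def by auto
  then show ?thesis by (simp add: nth_append)
next
  case False
  define m where "m = k - 1 - length xs"
  have "k - 1 = length xs + m" "skip j k - 1 = length xs + (length ys + m)"
    using False assms unfolding m_def skip_def by auto
  then show ?thesis by (simp only: nth_append_length_plus)
qed

lemma expansion_at_skip:
  assumes "length w = 2" and "1 \<le> k"
  shows "expansion_at n (u @ v) k = expansion_at n (u @ w @ v) (skip (length u + 1) k)"
proof -
  have "whitehead_expansion n (u @ w @ v) = (0 # body u) @ body w @ (body v @ [2*n+1])"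
    "whitehead_expansion n (u @ v) = (0 # body u) @ (body v @ [2*n+1])"
    unfolding whitehead_expansion_body by simp_all
  moreover have "((0 # body u) @ (body v @ [2*n+1])) ! (k - 1) =
      ((0 # body u) @ body w @ (body v @ [2*n+1])) ! (skip (length u + 1) k - 1)"
    by (rule nth_skip_block) (use assms in simp_all)
  ultimately show ?thesis unfolding expansion_at_def by simp
qed

lemma expansion_at_letter:
  assumes "l \<in> {1..length e}"
  shows "expansion_at n e (2*l) = sym_rank (e ! (l-1))"
    "expansion_at n e (2*l+1) = sym_rank (letter_inv (e ! (l-1)))"
proof -
  define u a v where "u = take (l-1) e" and "a = e ! (l-1)" and "v = drop l e"
  have "e = take (l-1) e @ e ! (l-1) # drop (Suc (l-1)) e"
    using assms by (intro id_take_nth_drop) auto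
  then have e: "u @ [a] @ v = e" unfolding u_def a_def v_def using assms by simp
  have pos: "2*l = 2 * length u + 2 + 0" "2*l+1 = 2 * length u + 2 + 1"
    unfolding u_def using assms by auto
  have "expansion_at n e (2*l) = sym_rank a"
    using expansion_at_segment[of 0 "[a]" n u v] unfolding e pos by (simp add: body_single)
  then show "expansion_at n e (2*l) = sym_rank (e ! (l-1))" unfolding a_def .
  have "expansion_at n e (2*l+1) = sym_rank (letter_inv a)"
    using expansion_at_segment[of 1 "[a]" n u v] unfolding e pos by (simp add: body_single)
  then show "expansion_at n e (2*l+1) = sym_rank (letter_inv (e ! (l-1)))" unfolding a_def .
qed

lemma sym_rank_range: "1 \<le> fst a \<Longrightarrow> fst a \<le> n \<Longrightarrow> sym_rank a \<in> {1..2*n}"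
  unfolding sym_rank_def by auto

lemma sym_rank_inv_neq: "1 \<le> fst a \<Longrightarrow> sym_rank (letter_inv a) \<noteq> sym_rank a"
  unfolding sym_rank_def letter_inv_def by auto

lemma sym_rank_inj: "1 \<le> fst a \<Longrightarrow> 1 \<le> fst b \<Longrightarrow> sym_rank a = sym_rank b \<Longrightarrow> a = b"
  unfolding sym_rank_def by (cases a; cases b) (auto split: if_splits; presburger)

lemma expression_of_nth:
  assumes "expression_of n e" "l \<in> {1..length e}"
  shows "1 \<le> fst (e ! (l-1)) \<and> fst (e ! (l-1)) \<le> n"
proof -
  have "e ! (l-1) \<in> set e" using assms(2) by (intro nth_mem) auto
  then show ?thesis using assms(1) unfolding expression_of_def by blast
qed

lemma expansion_at_interior:
  assumes "expression_of n e" "k \<in> {2..2 * length e + 1}"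
  shows "expansion_at n e k \<in> {1..2*n}"
proof -
  obtain l i where k: "k = 2*l + i" and i: "i \<in> {0, 1}" and l: "l \<in> {1..length e}"
  proof
    show "k = 2 * (k div 2) + k mod 2" by simp
    show "k mod 2 \<in> {0, 1}" by auto
    show "k div 2 \<in> {1..length e}" using assms(2) by auto
  qed
  have "expansion_at n e k \<in> {sym_rank (e ! (l-1)), sym_rank (letter_inv (e ! (l-1)))}"
    using i expansion_at_letter[OF l] unfolding k by auto
  moreover have letter: "1 \<le> fst (e ! (l-1))" "fst (e ! (l-1)) \<le> n"
    using expression_of_nth[OF assms(1) l] by simp_all
  moreover have "sym_rank (e ! (l-1)) \<in> {1..2*n}" "sym_rank (letter_inv (e ! (l-1))) \<in> {1..2*n}"
    using sym_rank_range[of "e ! (l-1)" n] sym_rank_range[of "letter_inv (e ! (l-1))" n] letter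
    by simp_all
  ultimately show ?thesis by auto
qed

lemma whitehead_alternating:
  assumes ex: "expression_of n e" and layout: "planar_layout (expansion_at n e) (length e + 1) \<pi>"
  shows "alternating_layout (expansion_at n e) (length e + 1) \<pi>"
proof (rule alternating_layout.intro[OF layout], unfold_locales)
  fix l assume "l \<in> {1..length e + 1 - 1}"
  then have l: "l \<in> {1..length e}" by simp
  show "expansion_at n e (2*l) \<noteq> expansion_at n e (2*l+1)"
    unfolding expansion_at_letter[OF l] using expression_of_nth[OF ex l] sym_rank_inv_neq by metis
next
  fix k assume "k \<in> {2..2*(length e + 1) - 1}"
  then have "expansion_at n e k \<in> {1..2*n}" using expansion_at_interior[OF ex] by simp
  moreover have "expansion_at n e 1 = 0" "expansion_at n e (2*(length e + 1)) = 2*n+1"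
    using expansion_at_first expansion_at_last[of n e] by simp_all
  ultimately show "expansion_at n e k \<noteq> expansion_at n e 1 \<and>
      expansion_at n e k \<noteq> expansion_at n e (2*(length e + 1))"
    by auto
qed

lemma cancel_at_expansion:
  assumes ex: "expression_of n (u @ [a, b] @ v)"
  shows "cancel_at (expansion_at n (u @ [a, b] @ v)) (length (u @ [a, b] @ v) + 1) (length u + 1)
           \<longleftrightarrow> b = letter_inv a"
proof -
  let ?c = "expansion_at n (u @ [a, b] @ v)" and ?p = "2 * length u + 2"
  have block: "?c (?p + i) = body [a, b] ! i" if "i < 4" for i
    using expansion_at_segment[of i "[a, b]" n u v] that by simp
  have "2 * (length u + 1) = ?p + 0" "2 * (length u + 1) + 1 = ?p + 1"
    "2 * (length u + 1) + 2 = ?p + 2" "2 * (length u + 1) + 3 = ?p + 3"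
    by simp_all
  then have "cancel_at ?c (length (u @ [a, b] @ v) + 1) (length u + 1) \<longleftrightarrow>
      sym_rank a = sym_rank (letter_inv b) \<and> sym_rank (letter_inv a) = sym_rank b"
    unfolding cancel_at_def using block[of 0] block[of 1] block[of 2] block[of 3]
    by (simp add: body_pair)
  moreover have "1 \<le> fst a" "1 \<le> fst b" using ex unfolding expression_of_def by auto
  ultimately show ?thesis using sym_rank_inj[of "letter_inv a" b] by auto
qed

lemma planar_expression_iff:
  "planar_expression n e \<longleftrightarrow> (\<exists>\<pi>. planar_layout (expansion_at n e) (length e + 1) \<pi>)"
proof -
  have "length (whitehead_expansion n e) = 2 * length e + 2"
    unfolding whitehead_expansion_body by simp
  moreover have "(\<lambda>i. whitehead_expansion n e ! (i - 1)) = expansion_at n e"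
    unfolding expansion_at_def ..
  ultimately show ?thesis unfolding planar_expression_def planar_tuple_iff_layout by simp
qed

lemma split_at_pair:
  assumes "1 \<le> j" "j < length e"
  shows "e = take (j-1) e @ [e ! (j-1), e ! j] @ drop (j+1) e"
proof -
  have "drop (j-1) e = e ! (j-1) # drop j e"
    using Cons_nth_drop_Suc[of "j-1" e] assms by simp
  moreover have "drop j e = e ! j # drop (j+1) e"
    using Cons_nth_drop_Suc[of j e] assms by simp
  ultimately show ?thesis using append_take_drop_id[of "j-1" e] by simp
qed

lemma cancellation_step:
  assumes ex: "expression_of n e" and layout: "planar_layout (expansion_at n e) (length e + 1) \<pi>"
    and "\<not> reduced e"
  shows "\<exists>u a v \<pi>'. e = u @ [a, letter_inv a] @ v \<and>
           planar_layout (expansion_at n (u @ v)) (length (u @ v) + 1) \<pi>'"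
proof -
  interpret alternating_layout "expansion_at n e" "length e + 1" \<pi>
    using whitehead_alternating[OF ex layout] .
  obtain u0 a0 v0 where e0: "e = u0 @ [a0, letter_inv a0] @ v0"
    using not_reduced_split assms(3) by blast
  then have "cancel_at (expansion_at n e) (length e + 1) (length u0 + 1)"
    using cancel_at_expansion[of n u0 a0 "letter_inv a0" v0] ex by simp
  then obtain j where j: "cancel_at (expansion_at n e) (length e + 1) j"
    and collapsed: "planar_layout (\<lambda>k. expansion_at n e (skip j k)) (length e + 1 - 2)
                      (\<lambda>k. \<pi> (skip j k))"
    using collapsible_cancellation by blast
  define u a b v where "u = take (j-1) e" and "a = e ! (j-1)" and "b = e ! j" and "v = drop (j+1) e"
  have "1 \<le> j" "j < length e" using j unfolding cancel_at_def by auto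
  then have e: "e = u @ [a, b] @ v" and u: "length u + 1 = j"
    unfolding u_def a_def b_def v_def using split_at_pair by auto
  have "b = letter_inv a" using cancel_at_expansion[of n u a b v] j ex unfolding u e[symmetric] by simp
  moreover have "planar_layout (expansion_at n (u @ v)) (length (u @ v) + 1) (\<lambda>k. \<pi> (skip j k))"
  proof (rule planar_layout_cong)
    show "planar_layout (\<lambda>k. expansion_at n e (skip j k)) (length (u @ v) + 1) (\<lambda>k. \<pi> (skip j k))"
      using collapsed e by simp
    show "expansion_at n (u @ v) k = expansion_at n e (skip j k)" if "k \<in> {1..2 * (length (u @ v) + 1)}" for k
      using expansion_at_skip[of "[a, b]" k n u v] that unfolding u e[symmetric] by simp
  qed
  ultimately show ?thesis using e by blast
qed

lemma freduce_layout:
  "expression_of n e \<Longrightarrow> planar_layout (expansion_at n e) (length e + 1) \<pi> \<Longrightarrow>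
   \<exists>\<pi>'. planar_layout (expansion_at n (freduce e)) (length (freduce e) + 1) \<pi>'"
proof (induction "length e" arbitrary: e \<pi> rule: less_induct)
  case less
  show ?case
  proof (cases "reduced e")
    case True
    then show ?thesis using less.prems freduce_reduced by auto
  next
    case False
    obtain u a v \<pi>' where e: "e = u @ [a, letter_inv a] @ v"
      and layout: "planar_layout (expansion_at n (u @ v)) (length (u @ v) + 1) \<pi>'"
      using cancellation_step[OF less.prems False] by blast
    have "expression_of n (u @ v)" using less.prems(1) unfolding e expression_of_def by auto
    moreover have "length (u @ v) < length e" unfolding e by simp
    ultimately have "\<exists>\<pi>''. planar_layout (expansion_at n (freduce (u @ v))) (length (freduce (u @ v)) + 1) \<pi>''"
      using less.hyps layout by blast
    then show ?thesis unfolding e freduce_cancel_pair .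
  qed
qed

theorem propositionA:
  fixes n :: nat and e :: "letter list"
  assumes "expression_of n e"
    and "planar_expression n e"
  shows "planar_expression n (freduce e)"
  using assms freduce_layout unfolding planar_expression_iff by blast

end
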